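(* Let $d, n \in \mathbb{N}$ and let $k$ be an integer with $0 \leq k \leq d$. The minimum number of $k$-dimensional affine subspaces of $\mathbb{R}^d$ whose union contains the lattice cube $\{0,\ldots,n-1\}^d$ is $n^{d-k}$.
   Context: The lattice cube $\{0,\ldots,n-1\}^d$ is viewed as a subset of $\mathbb{R}^d$. *)

theory Defs
  imports "HOL-Analysis.Analysis"
begin

definition lattice_cube :: "nat \<Rightarrow> (real ^ 'd) set" where
  "lattice_cube n = {x. \<forall>i. x $ i \<in> real ` {0..<n}}"

end

theory Submission
  imports Defs
begin

text \<open>Let \<open>S\<close> be a \<open>k\<close>-flat with direction space \<open>V\<close>. Extending a basis of \<open>V\<close> by standard basis
  vectors to a basis of \<open>\<real>\<^sup>d\<close>, the \<open>d - k\<close> added vectors span a complement of \<open>V\<close>, so the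
  remaining \<open>k\<close> coordinates determine the points of \<open>S\<close>. Hence \<open>S\<close> contains at most \<open>n\<^sup>k\<close>
  of the \<open>n\<^sup>d\<close> cube points, and a cover needs at least \<open>n\<^bsup>d-k\<^esup>\<close> flats. Fixing \<open>d - k\<close>
  coordinates to each of their \<open>n\<^bsup>d-k\<^esup>\<close> possible values gives a cover of that size.\<close>

definition coordinate_grid :: "real set \<Rightarrow> (real ^ 'd) set" where
  "coordinate_grid C = {x. \<forall>i. x $ i \<in> C}"

lemma lattice_cube_eq_coordinate_grid: "lattice_cube n = coordinate_grid (real ` {0..<n})"
  by (simp add: lattice_cube_def coordinate_grid_def)

lemma bij_betw_vec_nth_coordinate_grid:
  "bij_betw vec_nth (coordinate_grid C) (PiE UNIV (\<lambda>_. C))"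
proof (rule bij_betw_byWitness[where f' = vec_lambda])
  show "vec_nth ` coordinate_grid C \<subseteq> PiE UNIV (\<lambda>_. C)"
    by (auto simp: coordinate_grid_def)
  show "vec_lambda ` PiE UNIV (\<lambda>_. C) \<subseteq> coordinate_grid C"
    by (auto simp: coordinate_grid_def)
qed auto

lemma card_coordinate_grid:
  "card (coordinate_grid C :: (real ^ 'd) set) = card C ^ CARD('d)"
  using bij_betw_same_card[OF bij_betw_vec_nth_coordinate_grid] by (simp add: card_PiE)

lemma subspace_Int_span_Basis_complement:
  fixes V :: "'a::euclidean_space set"
  assumes "subspace V"
  obtains E where "E \<subseteq> Basis" "card E + dim V = DIM('a)" "V \<inter> span E = {0}"
proof -
  obtain BV where BV: "BV \<subseteq> V" "independent BV" "V \<subseteq> span BV" "card BV = dim V"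
    by (rule basis_exists)
  obtain B where B: "BV \<subseteq> B" "B \<subseteq> BV \<union> Basis" "independent B" "BV \<union> Basis \<subseteq> span B"
    using maximal_independent_subset_extend[of BV "BV \<union> Basis"] BV(2) by blast
  define E where "E = B - BV"
  have E: "E \<subseteq> Basis" "independent E"
    using B(2,3) independent_mono[OF B(3)] by (auto simp: E_def)
  have "UNIV \<subseteq> span B"
    using span_mono[of Basis "span B"] B(4) by (simp add: span_Basis span_span)
  then have span_B: "span B = UNIV"
    by blast
  have "card B = DIM('a)"
    using dim_eq_card_independent[OF B(3)] dim_span[of B] span_B by simp
  moreover have "finite B"
    using B(3) by (rule finiteI_independent)
  ultimately have card_E: "card E + dim V = DIM('a)"
    using B(1) BV(4) card_mono[of B BV] by (simp add: E_def card_Diff_subset finite_subset)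
  have "span V = V"
    using assms by (simp add: span_eq_iff)
  then have "span BV = V"
    using BV(1,3) span_mono[of BV V] by blast
  moreover have "B = BV \<union> E"
    using B(1) by (auto simp: E_def)
  ultimately have "{x + y |x y. x \<in> V \<and> y \<in> span E} = UNIV"
    using span_B span_Un[of BV E] by simp
  then have "DIM('a) + dim (V \<inter> span E) = dim V + card E"
    using dim_sums_Int[OF assms subspace_span[of E]] dim_eq_card_independent[OF E(2)] by simp
  then have "dim (V \<inter> span E) = 0"
    using card_E by linarith
  then have "V \<inter> span E = {0}"
    using assms by (auto simp: subspace_0)
  with E(1) card_E show thesis ..
qed

lemma affine_inj_on_coordinate_projection:
  fixes S :: "'a::euclidean_space set"
  assumes "affine S" "aff_dim S = int k"
  obtains I where "I \<subseteq> Basis" "card I = k" "inj_on (\<lambda>x. restrict (\<lambda>b. x \<bullet> b) I) S"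
proof -
  have "S \<noteq> {}"
    using assms(2) by auto
  then obtain a where "a \<in> S"
    by blast
  define V where "V = (\<lambda>x. x - a) ` S"
  have V: "subspace V"
    unfolding V_def using assms(1) \<open>a \<in> S\<close> by (rule affine_diffs_subspace_subtract)
  have "dim V = k"
    using aff_dim_subspace[OF V] aff_dim_translation_eq_subtract[of a S] assms(2)
    by (simp add: V_def)
  then obtain E where E: "E \<subseteq> Basis" "card E + k = DIM('a)" "V \<inter> span E = {0}"
    using subspace_Int_span_Basis_complement[OF V] by blast
  have "card (Basis - E) = k"
    using E(1,2) card_Diff_subset[OF finite_subset[OF E(1) finite_Basis] E(1)] by simp
  moreover have "inj_on (\<lambda>x. restrict (\<lambda>b. x \<bullet> b) (Basis - E)) S"
  proof (rule inj_onI)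
    fix x y assume "x \<in> S" "y \<in> S"
      and eq: "restrict (\<lambda>b. x \<bullet> b) (Basis - E) = restrict (\<lambda>b. y \<bullet> b) (Basis - E)"
    have "x - a \<in> V" "y - a \<in> V"
      using \<open>x \<in> S\<close> \<open>y \<in> S\<close> by (auto simp: V_def)
    then have "x - y \<in> V"
      using subspace_diff[OF V] by fastforce
    moreover have "(x - y) \<bullet> b = 0" if "b \<in> Basis" "b \<notin> E" for b
      using fun_cong[OF eq, of b] that by (simp add: inner_diff_left)
    then have "x - y \<in> span E"
      by (simp add: span_substd_basis[OF E(1)])
    ultimately have "x - y \<in> V \<inter> span E"
      by blast
    then show "x = y"
      using E(3) by simp
  qed
  ultimately show thesis
    using that[of "Basis - E"] by blast
qed

lemma card_affine_Int_coordinate_grid_le: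
  fixes S :: "(real ^ 'd) set"
  assumes "affine S" "aff_dim S = int k" "finite C"
  shows "card (S \<inter> coordinate_grid C) \<le> card C ^ k"
proof -
  obtain I where I: "I \<subseteq> Basis" "card I = k"
    and inj: "inj_on (\<lambda>x. restrict (\<lambda>b. x \<bullet> b) I) S"
    using affine_inj_on_coordinate_projection[OF assms(1,2)] by blast
  have "(\<lambda>x. restrict (\<lambda>b. x \<bullet> b) I) ` (S \<inter> coordinate_grid C) \<subseteq> PiE I (\<lambda>_. C)"
    using I(1) by (auto simp: coordinate_grid_def Basis_vec_def inner_axis)
  then have "card (S \<inter> coordinate_grid C) \<le> card (PiE I (\<lambda>_. C))"
    using inj_on_subset[OF inj] assms(3)
    by (intro card_inj_on_le) (auto simp: finite_PiE finite_subset[OF I(1)])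
  also have "\<dots> = card C ^ k"
    using I by (simp add: card_PiE finite_subset)
  finally show ?thesis .
qed

lemma coordinate_flat_eq_translation:
  "{x::real ^ 'd. \<forall>i\<in>J. x $ i = c i} = (+) (\<chi> i. c i) ` {x. \<forall>i\<in>J. x $ i = 0}"
proof (intro equalityI subsetI)
  fix x :: "real ^ 'd"
  assume "x \<in> {x. \<forall>i\<in>J. x $ i = c i}"
  then have "x - (\<chi> i. c i) \<in> {x. \<forall>i\<in>J. x $ i = 0}"
    by simp
  then show "x \<in> (+) (\<chi> i. c i) ` {x. \<forall>i\<in>J. x $ i = 0}"
    by (rule rev_image_eqI) simp
qed auto

lemma subspace_coordinate_zeros: "subspace {x::real ^ 'd. \<forall>i\<in>J. x $ i = 0}"
  by (auto simp: subspace_def)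

lemma affine_coordinate_flat: "affine {x::real ^ 'd. \<forall>i\<in>J. x $ i = c i}"
  by (subst coordinate_flat_eq_translation)
    (rule affine_translation[THEN iffD1, OF subspace_imp_affine[OF subspace_coordinate_zeros]])

lemma aff_dim_coordinate_flat:
  "aff_dim {x::real ^ 'd. \<forall>i\<in>J. x $ i = c i} = int (CARD('d) - card J)"
proof -
  have "dim {x::real ^ 'd. \<forall>i\<in>J. x $ i = 0} = card (- J)"
    using dim_substandard_cart[where 'a = real and d = "- J"] by (simp add: dim_vec_eq Ball_def)
  then show ?thesis
    by (subst coordinate_flat_eq_translation)
      (simp add: aff_dim_translation_eq aff_dim_subspace subspace_coordinate_zeros
        Compl_eq_Diff_UNIV card_Diff_subset)
qed

lemma coordinate_grid_covered_by_flats: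
  assumes "finite C" "k \<le> CARD('d)"
  obtains \<F> :: "(real ^ 'd) set set"
  where "finite \<F>" "card \<F> \<le> card C ^ (CARD('d) - k)"
    "\<forall>S\<in>\<F>. affine S \<and> aff_dim S = int k" "coordinate_grid C \<subseteq> \<Union>\<F>"
proof -
  obtain J :: "'d set" where J: "card J = CARD('d) - k"
    using obtain_subset_with_card_n[of "CARD('d) - k" "UNIV :: 'd set"] by auto
  define flat where "flat c = {x::real ^ 'd. \<forall>i\<in>J. x $ i = c i}" for c
  have "card (flat ` PiE J (\<lambda>_. C)) \<le> card C ^ (CARD('d) - k)"
    using card_image_le[of "PiE J (\<lambda>_. C)" flat] assms(1) J
    by (simp add: finite_PiE card_PiE)
  moreover have "\<forall>S\<in>flat ` PiE J (\<lambda>_. C). affine S \<and> aff_dim S = int k"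
    using J assms(2) by (simp add: flat_def affine_coordinate_flat aff_dim_coordinate_flat)
  moreover have "x \<in> flat (restrict (vec_nth x) J)" "restrict (vec_nth x) J \<in> PiE J (\<lambda>_. C)"
    if "x \<in> coordinate_grid C" for x
    using that by (auto simp: flat_def coordinate_grid_def)
  then have "coordinate_grid C \<subseteq> \<Union> (flat ` PiE J (\<lambda>_. C))"
    by blast
  ultimately show thesis
    using assms(1) by (intro that[of "flat ` PiE J (\<lambda>_. C)"]) (auto simp: finite_PiE)
qed

lemma card_cover_of_coordinate_grid_ge:
  fixes \<F> :: "(real ^ 'd) set set"
  assumes "finite C" "C \<noteq> {}" "k \<le> CARD('d)" "finite \<F>"
    and "\<forall>S\<in>\<F>. affine S \<and> aff_dim S = int k" "coordinate_grid C \<subseteq> \<Union>\<F>"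
  shows "card C ^ (CARD('d) - k) \<le> card \<F>"
proof -
  have "card C ^ CARD('d) = card (coordinate_grid C :: (real ^ 'd) set)"
    by (rule card_coordinate_grid[symmetric])
  also have "\<dots> = card (\<Union>S\<in>\<F>. S \<inter> coordinate_grid C)"
    using assms(6) by (intro arg_cong[where f = card]) blast
  also have "\<dots> \<le> (\<Sum>S\<in>\<F>. card (S \<inter> coordinate_grid C))"
    using assms(4) by (rule card_UN_le)
  also have "\<dots> \<le> (\<Sum>S\<in>\<F>. card C ^ k)"
    using assms(1,5) card_affine_Int_coordinate_grid_le by (intro sum_mono) blast
  finally have "card C ^ (CARD('d) - k) * card C ^ k \<le> card \<F> * card C ^ k"
    using assms(3) by (simp flip: power_add)
  moreover have "card C > 0"
    using assms(1,2) by (simp add: card_gt_0_iff)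
  ultimately show ?thesis
    by simp
qed

theorem corollary2:
  fixes n k :: nat
  assumes "n \<ge> 1" and "k \<le> CARD('d::finite)"
  shows "n ^ (CARD('d) - k) = (LEAST m. \<exists>\<F> :: (real ^ 'd) set set.
                    finite \<F> \<and> card \<F> = m \<and> (\<forall>S\<in>\<F>. affine S \<and> aff_dim S = int k) \<and>
                    lattice_cube n \<subseteq> \<Union>\<F>)"
proof -
  define C where "C = real ` {0..<n}"
  have C: "finite C" "C \<noteq> {}" "card C = n"
    using assms(1) by (auto simp: C_def card_image)
  have lower: "n ^ (CARD('d) - k) \<le> card \<F>"
    if "finite \<F>" "\<forall>S\<in>\<F>. affine S \<and> aff_dim S = int k" "lattice_cube n \<subseteq> \<Union>\<F>"
    for \<F> :: "(real ^ 'd) set set"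
    using card_cover_of_coordinate_grid_ge[OF C(1,2) assms(2) that(1,2)] that(3) C(3)
    by (simp add: lattice_cube_eq_coordinate_grid C_def)
  obtain \<F> :: "(real ^ 'd) set set" where \<F>: "finite \<F>" "card \<F> \<le> n ^ (CARD('d) - k)"
    "\<forall>S\<in>\<F>. affine S \<and> aff_dim S = int k" "lattice_cube n \<subseteq> \<Union>\<F>"
    using coordinate_grid_covered_by_flats[OF C(1) assms(2)] C(3)
    by (metis lattice_cube_eq_coordinate_grid C_def)
  then have "card \<F> = n ^ (CARD('d) - k)"
    using lower by (simp add: le_antisym)
  then show ?thesis
    using \<F> lower by (intro Least_equality[symmetric]) auto
qed

end
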